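(* For every integer $k\ge1$ and every $x\in\mathbb{C}$, $$\sum_{n=0}^{k}p(n)x^n=\det\big[d_{i-j}-x\,d_{i-j+1}\big]_{0\le i,j\le k-1}.$$
   Context: $p(n)$ is the number of partitions of $n$ ($p(0)=1$). With $q_m=m(3m-1)/2$ ($m\in\mathbb{Z}$) the generalized pentagonal numbers, $d_q=(-1)^m$ if $q=q_m$ for some $m$, $d_q=0$ for other integers $q\ge0$, and $d_q=0$ for $q<0$; thus $\sum_{q\ge0}d_qz^q=\prod_{k\ge1}(1-z^k)$. *)

theory Defs
  imports Complex_Main "HOL-Library.Multiset" "Jordan_Normal_Form.Determinant"
begin

definition partition_count :: "nat \<Rightarrow> nat" where
  "partition_count n = card {M :: nat multiset. (\<forall>x\<in>#M. 0 < x) \<and> sum_mset M = n}"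

definition pent_coeff :: "int \<Rightarrow> complex" where
  "pent_coeff q = (if 0 \<le> q \<and> (\<exists>m::int. 2 * q = m * (3 * m - 1))
     then (-1) ^ nat \<bar>THE m::int. 2 * q = m * (3 * m - 1)\<bar> else 0)"

end

theory Submission
  imports Defs "HOL-Library.Disjoint_Sets"
begin

text \<open>
  The generating functions of d and p are inverse to each other, which on coefficients reads
  sum_{l<=n} d(l) p(n - l) = [n = 0]. Both ingredients are proved bijectively: d(n) is the
  number of partitions of n into an even number of distinct parts minus those into an odd
  number (Franklin's involution, i.e. Euler's pentagonal number theorem), and the convolution
  identity follows from the sign-reversing involution on pairs (distinct-part partition,
  partition) that moves the overall smallest part from one component to the other.

  With P = [p(i - j)] lower unitriangular, the identity turns M = [d(i - j) - x d(i - j + 1)]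
  into P M = I - x S + x c e_0^T, where S is the superdiagonal shift and c = (p(i + 1))_i.
  Multiplying by the upper unitriangular U = [x^(j - i)] (zero below the diagonal) clears
  everything above the diagonal and leaves the diagonal (sum_{n<=k} p(n) x^n, 1, ..., 1);
  since det U = det P = 1, this is det M.
\<close>

section \<open>Runs and strict partitions\<close>

fun consec_run :: "nat list \<Rightarrow> nat" where
  "consec_run [] = 0"
| "consec_run [x] = 1"
| "consec_run (x # y # ys) = (if x = Suc y then Suc (consec_run (y # ys)) else 1)"

lemma consec_run_pos: "L \<noteq> [] \<Longrightarrow> 0 < consec_run L"
  by (induction L rule: consec_run.induct) auto

lemma consec_run_le_length: "consec_run L \<le> length L"
  by (induction L rule: consec_run.induct) auto

lemma consec_run_maximal:
  "0 < consec_run L \<Longrightarrow> consec_run L < length L \<Longrightarrow>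
   L ! (consec_run L - 1) \<noteq> Suc (L ! consec_run L)"
proof (induction L rule: consec_run.induct)
  case (3 x y ys)
  show ?case
  proof (cases "x = Suc y")
    case True
    have pos: "0 < consec_run (y # ys)" by (rule consec_run_pos) simp
    moreover have "consec_run (y # ys) < length (y # ys)" using 3(3) True by simp
    ultimately have "(y # ys) ! (consec_run (y # ys) - 1) \<noteq> Suc ((y # ys) ! consec_run (y # ys))"
      using 3(1) True by blast
    then show ?thesis using True pos by (cases "consec_run (y # ys)") auto
  qed simp
qed auto

lemma consec_run_append:
  assumes "xs \<noteq> []" "consec_run xs = length xs"
  shows "consec_run (xs @ ys) =
    (if ys \<noteq> [] \<and> last xs = Suc (hd ys) then length xs + consec_run ys else length xs)"
  using assms
proof (induction xs rule: consec_run.induct)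
  case (2 x)
  then show ?case by (cases ys) auto
next
  case (3 x y zs)
  then have "x = Suc y" by (auto split: if_splits)
  with 3 show ?case by auto
qed auto

lemma consec_run_map_Suc: "consec_run (map Suc xs) = consec_run xs"
  by (induction xs rule: consec_run.induct) auto

lemma consec_run_map_pred: "0 \<notin> set xs \<Longrightarrow> consec_run (map (\<lambda>y. y - 1) xs) = consec_run xs"
  by (induction xs rule: consec_run.induct) auto

lemma consec_run_take: "0 < s \<Longrightarrow> s \<le> consec_run L \<Longrightarrow> consec_run (take s L) = s"
proof (induction L arbitrary: s rule: consec_run.induct)
  case (2 x)
  then show ?case by (cases s) auto
next
  case (3 x y ys)
  then obtain t where s: "s = Suc t" by (cases s) auto
  show ?case
  proof (cases t)
    case (Suc u)
    with 3 s have "x = Suc y" "t \<le> consec_run (y # ys)" by (auto split: if_splits)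
    with 3(1)[of t] Suc s show ?thesis by simp
  qed (simp add: s)
qed auto

lemma sum_list_map_Suc: "sum_list (map Suc xs) = sum_list xs + length xs"
  by (induction xs) auto

lemma sum_list_map_pred:
  "0 \<notin> set xs \<Longrightarrow> sum_list (map (\<lambda>y. y - 1) xs) + length xs = sum_list (xs :: nat list)"
  by (induction xs) auto

lemma sorted_wrt_greater_last_le:
  fixes L :: "nat list"
  assumes "sorted_wrt (>) L" "x \<in> set L"
  shows "last L \<le> x"
proof -
  obtain L' a where L: "L = L' @ [a]" using assms(2) by (cases L rule: rev_cases) auto
  then show ?thesis using assms by (auto simp: sorted_wrt_append)
qed

lemma sorted_wrt_greater_le_hd:
  fixes L :: "nat list"
  assumes "sorted_wrt (>) L" "x \<in> set L"
  shows "x \<le> hd L"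
  using assms by (cases L) auto

definition strict_partitions :: "nat \<Rightarrow> nat list set" where
  "strict_partitions n = {L. sorted_wrt (>) L \<and> 0 \<notin> set L \<and> sum_list L = n}"

lemma strict_partitions_0: "strict_partitions 0 = {[]}"
  by (auto simp: strict_partitions_def) (metis list.set_intros(1) neq_Nil_conv)

lemma finite_strict_partitions: "finite (strict_partitions n)"
proof (rule finite_subset)
  show "strict_partitions n \<subseteq> {xs. set xs \<subseteq> {1..n} \<and> length xs \<le> n}"
  proof safe
    fix L x assume "L \<in> strict_partitions n" "x \<in> set L"
    then show "x \<in> {1..n}"
      by (auto simp: strict_partitions_def Suc_le_eq member_le_sum_list intro: gr0I)
  next
    fix L assume L: "L \<in> strict_partitions n"
    have "length L \<le> sum_list L" if "0 \<notin> set L" for L :: "nat list"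
      using that by (induction L) (auto simp: Suc_le_eq)
    with L show "length L \<le> n" by (auto simp: strict_partitions_def)
  qed
qed (simp add: finite_lists_length_le)

section \<open>Franklin's involution\<close>

text \<open>For a strict partition with smallest part s and an initial run of r consecutive parts,
  franklin_lower removes the part s and adds 1 to the s largest parts (possible when s \<le> r,
  except when all parts form the run and s = r), and franklin_raise subtracts 1 from the r parts
  of the run and appends r as new smallest part (possible when r < s, except when all parts
  form the run and s = r + 1). The two exceptions are the pentagonal staircases.\<close>
definition franklin_lower :: "nat list \<Rightarrow> nat list" where
  "franklin_lower L = map Suc (take (last L) L) @ butlast (drop (last L) L)"

definition franklin_raise :: "nat list \<Rightarrow> nat list" where
  "franklin_raise L =
     map (\<lambda>y. y - 1) (take (consec_run L) L) @ drop (consec_run L) L @ [consec_run L]"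

definition franklin_A :: "nat \<Rightarrow> nat list set" where
  "franklin_A n = {L \<in> strict_partitions n. L \<noteq> [] \<and> last L \<le> consec_run L \<and> last L < length L}"

definition franklin_B :: "nat \<Rightarrow> nat list set" where
  "franklin_B n = {L \<in> strict_partitions n. L \<noteq> [] \<and> consec_run L < last L \<and>
     \<not> (consec_run L = length L \<and> last L = Suc (consec_run L))}"

lemma franklin_A_decomp:
  assumes "L \<in> franklin_A n"
  obtains T R where "L = T @ R @ [last L]" "length T = last L" "consec_run T = last L" "0 < last L"
proof -
  define s where "s = last L"
  from assms have L: "L \<noteq> []" "0 \<notin> set L" and s: "s \<le> consec_run L" "s < length L"
    by (auto simp: franklin_A_def strict_partitions_def s_def)
  have "0 < s" using L unfolding s_def by (metis last_in_set gr0I)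
  have "drop s L \<noteq> []" "last (drop s L) = s" using s(2) by (auto simp: s_def)
  then have "drop s L = butlast (drop s L) @ [s]" by (metis append_butlast_last_id)
  then have "L = take s L @ butlast (drop s L) @ [s]" by (metis append_take_drop_id)
  then show thesis
    using that consec_run_take[OF \<open>0 < s\<close> s(1)] s(2) \<open>0 < s\<close> unfolding s_def by simp
qed

lemma franklin_lower_decomp:
  "L = T @ R @ [s] \<Longrightarrow> length T = s \<Longrightarrow> franklin_lower L = map Suc T @ R"
  by (simp add: franklin_lower_def)

lemma consec_run_franklin_lower:
  assumes "L \<in> franklin_A n"
  shows "consec_run (franklin_lower L) = last L"
proof -
  obtain T R where L: "L = T @ R @ [last L]" and T: "length T = last L" "consec_run T = last L"
    and pos: "0 < last L"
    using franklin_A_decomp[OF assms] .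
  have "sorted_wrt (>) (T @ R @ [last L])" using assms L by (simp add: franklin_A_def strict_partitions_def)
  moreover have "T \<noteq> []" using T pos by auto
  ultimately have "R \<noteq> [] \<Longrightarrow> hd R < last T" by (auto simp: sorted_wrt_append)
  then show ?thesis
    using consec_run_append[of "map Suc T" R] \<open>T \<noteq> []\<close> T
    by (auto simp: franklin_lower_decomp[OF L T(1)] consec_run_map_Suc last_map)
qed

lemma franklin_lower_in_B:
  assumes "L \<in> franklin_A n"
  shows "franklin_lower L \<in> franklin_B n"
proof -
  obtain T R where L: "L = T @ R @ [last L]" and T: "length T = last L" "consec_run T = last L"
    and pos: "0 < last L"
    using franklin_A_decomp[OF assms] .
  define s where "s = last L"
  have lower: "franklin_lower L = map Suc T @ R" using franklin_lower_decomp[OF L T(1)] .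
  have sorted: "sorted_wrt (>) (T @ R @ [s])" and parts: "0 \<notin> set (T @ R @ [s])"
    and sum: "sum_list (T @ R @ [s]) = n"
    using assms L by (simp_all add: franklin_A_def strict_partitions_def s_def)
  have "T \<noteq> []" using T pos by auto
  then have "s < last T" using sorted by (simp add: sorted_wrt_append)
  have above_s: "s < last (map Suc T @ R)"
  proof (cases "R = []")
    case True
    then show ?thesis using \<open>T \<noteq> []\<close> \<open>s < last T\<close> by (simp add: last_map)
  qed (use sorted in \<open>simp add: sorted_wrt_append\<close>)
  have "sorted_wrt (>) (map Suc T @ R)"
    using sorted by (auto simp: sorted_wrt_append sorted_wrt_map intro: less_SucI)
  moreover have "0 \<notin> set (map Suc T @ R)" using parts by auto
  moreover have "sum_list (map Suc T @ R) = n" using sum T by (simp add: sum_list_map_Suc s_def)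
  moreover have "\<not> (s = length (map Suc T @ R) \<and> last (map Suc T @ R) = Suc s)"
    using \<open>s < last T\<close> \<open>T \<noteq> []\<close> T(1) by (cases "R = []") (auto simp: sorted_wrt_append last_map s_def)
  ultimately show ?thesis
    using above_s consec_run_franklin_lower[OF assms] \<open>T \<noteq> []\<close>
    unfolding franklin_B_def strict_partitions_def lower s_def by auto
qed

lemma franklin_raise_lower:
  assumes "L \<in> franklin_A n"
  shows "franklin_raise (franklin_lower L) = L"
proof -
  obtain T R where L: "L = T @ R @ [last L]" and T: "length T = last L" "consec_run T = last L"
    and pos: "0 < last L"
    using franklin_A_decomp[OF assms] .
  have "take (last L) (map Suc T @ R) = map Suc T" "drop (last L) (map Suc T @ R) = R"
    using T(1) by simp_all
  then have "franklin_raise (franklin_lower L) = T @ R @ [last L]"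
    using consec_run_franklin_lower[OF assms]
    by (simp add: franklin_raise_def franklin_lower_decomp[OF L T(1)] comp_def)
  with L show ?thesis by simp
qed

lemma franklin_B_decomp:
  assumes "L \<in> franklin_B n"
  obtains T D where "L = T @ D" "length T = consec_run L" "consec_run T = consec_run L" "T \<noteq> []"
proof -
  have "L \<noteq> []" using assms by (simp add: franklin_B_def)
  then have "0 < consec_run L" by (rule consec_run_pos)
  then show thesis
    using that[of "take (consec_run L) L" "drop (consec_run L) L"] \<open>L \<noteq> []\<close> consec_run_le_length[of L]
      consec_run_take[of "consec_run L" L]
    by (simp add: min_absorb2)
qed

lemma franklin_raise_decomp:
  "L = T @ D \<Longrightarrow> length T = consec_run L \<Longrightarrow>
   franklin_raise L = map (\<lambda>y. y - 1) T @ D @ [consec_run L]"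
  by (simp add: franklin_raise_def)

text \<open>Outside the staircases, the last part of the run exceeds by at least 2 both the new
  smallest part and every part below the run; this is what keeps the raised list strictly
  decreasing.\<close>
lemma franklin_B_gap:
  assumes "L \<in> franklin_B n" "L = T @ D" "length T = consec_run L" "T \<noteq> []"
  shows "consec_run L + 2 \<le> last T" "\<And>y. y \<in> set D \<Longrightarrow> y + 2 \<le> last T"
proof -
  define r where "r = consec_run L"
  from assms(1) have sorted: "sorted_wrt (>) L" and L: "L \<noteq> []" and r: "r < last L"
    and non_stair: "\<not> (r = length L \<and> last L = Suc r)"
    by (auto simp: franklin_B_def strict_partitions_def r_def)
  have gap: "r + 2 \<le> last T \<and> (D \<noteq> [] \<longrightarrow> hd D + 2 \<le> last T)"
  proof (cases "D = []")
    case True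
    then show ?thesis using assms(2,3) r non_stair by (auto simp: r_def)
  next
    case False
    have "hd D < last T" using sorted assms(2,4) False by (simp add: sorted_wrt_append)
    moreover have "last T \<noteq> Suc (hd D)"
      using consec_run_maximal[of L] consec_run_pos[OF L] assms(2-4) False
      by (simp add: last_conv_nth nth_append hd_conv_nth)
    moreover have "last L \<le> hd D"
      using sorted_wrt_greater_last_le[OF sorted, of "hd D"] assms(2) False by simp
    ultimately show ?thesis using False r by auto
  qed
  then show "consec_run L + 2 \<le> last T" by (simp add: r_def)
  fix y assume "y \<in> set D"
  moreover have "sorted_wrt (>) D" using sorted assms(2) by (simp add: sorted_wrt_append)
  ultimately show "y + 2 \<le> last T" using gap sorted_wrt_greater_le_hd[of D y] by fastforce
qed

lemma sorted_wrt_greater_map_pred: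
  fixes T :: "nat list"
  assumes "sorted_wrt (>) T" "0 \<notin> set T"
  shows "sorted_wrt (>) (map (\<lambda>y. y - 1) T)"
  unfolding sorted_wrt_map
proof (rule sorted_wrt_mono_rel[OF _ assms(1)])
  show "x - 1 > y - 1" if "x \<in> set T" "y \<in> set T" "x > y" for x y
    using that assms(2) by (cases y) auto
qed

lemma franklin_raise_strict:
  assumes "L \<in> franklin_B n"
  shows "sorted_wrt (>) (franklin_raise L)" "0 \<notin> set (franklin_raise L)"
proof -
  obtain T D where L: "L = T @ D" and T: "length T = consec_run L" "T \<noteq> []"
    using franklin_B_decomp[OF assms] by metis
  define r where "r = consec_run L"
  have raise: "franklin_raise L = map (\<lambda>y. y - 1) T @ D @ [r]"
    using franklin_raise_decomp[OF L T(1)] by (simp add: r_def)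
  have sorted: "sorted_wrt (>) (T @ D)" and parts: "0 \<notin> set (T @ D)" and r: "r < last L"
    using assms L by (auto simp: franklin_B_def strict_partitions_def r_def)
  note gap = franklin_B_gap[OF assms L T, folded r_def]
  have last_le: "last T \<le> x" if "x \<in> set T" for x
    using sorted_wrt_greater_last_le[of T x] sorted that by (simp add: sorted_wrt_append)
  have "sorted_wrt (>) (map (\<lambda>y. y - 1) T)"
    using sorted_wrt_greater_map_pred[of T] sorted parts by (simp add: sorted_wrt_append)
  moreover have "sorted_wrt (>) (D @ [r])"
  proof -
    have "r < y" if "y \<in> set D" for y
      using sorted_wrt_greater_last_le[OF sorted, of y] r that unfolding L by simp
    then show ?thesis using sorted by (simp add: sorted_wrt_append)
  qed
  moreover have "y < x - 1" if "x \<in> set T" "y \<in> set (D @ [r])" for x y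
  proof -
    have "y + 2 \<le> last T" using that(2) gap by auto
    then show ?thesis using last_le[OF that(1)] by linarith
  qed
  ultimately show "sorted_wrt (>) (franklin_raise L)" by (simp add: raise sorted_wrt_append)
  have "0 < r" using T unfolding r_def by (metis length_greater_0_conv)
  moreover have "0 < x - 1" if "x \<in> set T" for x
    using last_le[OF that] gap(1) by linarith
  ultimately show "0 \<notin> set (franklin_raise L)" using parts by (force simp: raise)
qed

lemma franklin_raise_in_A:
  assumes "L \<in> franklin_B n"
  shows "franklin_raise L \<in> franklin_A n"
proof -
  obtain T D where L: "L = T @ D" and T: "length T = consec_run L" "consec_run T = consec_run L"
    "T \<noteq> []"
    using franklin_B_decomp[OF assms] .
  define r where "r = consec_run L"
  have raise: "franklin_raise L = map (\<lambda>y. y - 1) T @ D @ [r]"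
    using franklin_raise_decomp[OF L T(1)] by (simp add: r_def)
  have parts: "0 \<notin> set (T @ D)" and sum: "sum_list (T @ D) = n"
    using assms L by (auto simp: franklin_B_def strict_partitions_def)
  have "sum_list (franklin_raise L) = n"
    using sum_list_map_pred[of T] parts sum T(1) by (simp add: raise r_def)
  moreover have "r \<le> consec_run (franklin_raise L)"
  proof -
    have "consec_run (map (\<lambda>y. y - 1) T) = length (map (\<lambda>y. y - 1) T)"
      using consec_run_map_pred[of T] parts T(1,2) by simp
    from consec_run_append[OF _ this, of "D @ [r]"] show ?thesis
      using T(1,3) by (simp add: raise r_def split: if_splits)
  qed
  ultimately show ?thesis
    using T(1) franklin_raise_strict[OF assms]
    by (simp add: franklin_A_def strict_partitions_def raise r_def)
qed

lemma franklin_lower_raise: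
  assumes "L \<in> franklin_B n"
  shows "franklin_lower (franklin_raise L) = L"
proof -
  obtain T D where L: "L = T @ D" and T: "length T = consec_run L" "consec_run T = consec_run L"
    "T \<noteq> []"
    using franklin_B_decomp[OF assms] .
  have "0 \<notin> set T" using assms L by (simp add: franklin_B_def strict_partitions_def)
  then have "map Suc (map (\<lambda>y. y - 1) T) = T" by (induction T) auto
  then show ?thesis
    using franklin_lower_decomp[OF franklin_raise_decomp[OF L T(1)]] T(1) L by simp
qed

section \<open>Pentagonal staircases\<close>

fun staircase :: "nat \<Rightarrow> nat \<Rightarrow> nat list" where
  "staircase a 0 = []"
| "staircase a (Suc r) = (a + r) # staircase a r"

lemma length_staircase [simp]: "length (staircase a r) = r"
  by (induction r) auto

lemma set_staircase: "set (staircase a r) = {a..<a + r}"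
  by (induction r) auto

lemma consec_run_staircase: "consec_run (staircase a r) = r"
proof (induction r)
  case (Suc r)
  then show ?case by (cases r) auto
qed simp

lemma sorted_staircase: "sorted_wrt (>) (staircase a r)"
  by (induction r) (auto simp: set_staircase)

lemma last_staircase: "0 < r \<Longrightarrow> last (staircase a r) = a"
proof (induction r)
  case (Suc r)
  then show ?case by (cases r) auto
qed simp

lemma sum_list_staircase: "2 * int (sum_list (staircase a r)) = int r * (2 * int a + int r - 1)"
  by (induction r) (auto simp: algebra_simps)

lemma consec_run_eq_length_imp_staircase:
  "L \<noteq> [] \<Longrightarrow> consec_run L = length L \<Longrightarrow> L = staircase (last L) (length L)"
proof (induction L rule: consec_run.induct)
  case (3 x y ys)
  then have "x = Suc y" and "y # ys = staircase (last (y # ys)) (Suc (length ys))"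
    by (auto split: if_splits)
  then show ?case
    by (metis last_ConsR length_Cons list.discI list.inject staircase.simps(2) add_Suc_right)
qed auto

definition pentagonal_staircases :: "nat \<Rightarrow> nat list set" where
  "pentagonal_staircases n = {L \<in> strict_partitions n. L \<noteq> [] \<and> consec_run L = length L \<and>
     last L \<in> {length L, Suc (length L)}}"

lemma strict_partitions_franklin_split:
  assumes "0 < n"
  shows "strict_partitions n = (franklin_A n \<union> franklin_B n) \<union> pentagonal_staircases n"
    "franklin_A n \<inter> franklin_B n = {}" "(franklin_A n \<union> franklin_B n) \<inter> pentagonal_staircases n = {}"
proof -
  show "strict_partitions n = (franklin_A n \<union> franklin_B n) \<union> pentagonal_staircases n"
  proof (intro equalityI subsetI)
    fix L assume L: "L \<in> strict_partitions n"
    then have "L \<noteq> []" using assms by (auto simp: strict_partitions_def)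
    then show "L \<in> (franklin_A n \<union> franklin_B n) \<union> pentagonal_staircases n"
      using L consec_run_le_length[of L]
      by (cases "last L \<le> consec_run L")
        (auto simp: franklin_A_def franklin_B_def pentagonal_staircases_def)
  qed (auto simp: franklin_A_def franklin_B_def pentagonal_staircases_def)
qed (auto simp: franklin_A_def franklin_B_def pentagonal_staircases_def)

definition pent_roots :: "int \<Rightarrow> int set" where
  "pent_roots q = {m. 2 * q = m * (3 * m - 1)}"

lemma pent_number_inj:
  assumes "(m::int) * (3 * m - 1) = m' * (3 * m' - 1)"
  shows "m = m'"
proof -
  have "(m - m') * (3 * (m + m') - 1) = 0" using assms by (simp add: algebra_simps)
  moreover have "3 * (m + m') - 1 \<noteq> 0" by presburger
  ultimately show ?thesis by simp
qed

lemma pent_number_nonneg: "0 \<le> (m::int) * (3 * m - 1)"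
  by (cases "m \<ge> 1") (auto intro: mult_nonneg_nonneg mult_nonpos_nonpos)

lemma pent_roots_cases: "pent_roots q = {} \<or> (\<exists>m. pent_roots q = {m})"
proof (cases "pent_roots q = {}")
  case False
  then obtain m where m: "m \<in> pent_roots q" by blast
  have "m' = m" if "m' \<in> pent_roots q" for m'
    using that m pent_number_inj[of m' m] by (simp add: pent_roots_def)
  then have "pent_roots q = {m}" using m by blast
  then show ?thesis by blast
qed simp

lemma pent_coeff_eq_sum_pent_roots: "pent_coeff q = (\<Sum>m\<in>pent_roots q. (-1) ^ nat \<bar>m\<bar>)"
proof (cases "pent_roots q = {}")
  case False
  then obtain m where m: "pent_roots q = {m}" using pent_roots_cases by blast
  then have root: "2 * q = m * (3 * m - 1)" by (auto simp: pent_roots_def)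
  have "0 \<le> m * (3 * m - 1)" by (rule pent_number_nonneg)
  moreover have "(THE m. 2 * q = m * (3 * m - 1)) = m"
  proof (rule the_equality)
    show "m' = m" if "2 * q = m' * (3 * m' - 1)" for m'
      using pent_number_inj[of m' m] that root by simp
  qed (rule root)
  ultimately show ?thesis using root m by (auto simp: pent_coeff_def)
qed (auto simp: pent_coeff_def pent_roots_def)

text \<open>A root m > 0 corresponds to the staircase m, ..., 2m - 1 and a root -r < 0 to the
  staircase r + 1, ..., 2r.\<close>
definition staircase_of_pent :: "int \<Rightarrow> nat list" where
  "staircase_of_pent m =
     (if 0 < m then staircase (nat m) (nat m) else staircase (Suc (nat (- m))) (nat (- m)))"

definition pent_of_staircase :: "nat list \<Rightarrow> int" where
  "pent_of_staircase L = (if last L = length L then int (length L) else - int (length L))"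

lemma staircase_of_pent_in_pentagonal_staircases:
  assumes "m \<in> pent_roots (int n)" "m \<noteq> 0"
  shows "staircase_of_pent m \<in> pentagonal_staircases n"
proof -
  define L where "L = staircase_of_pent m"
  have "2 * int (sum_list L) = m * (3 * m - 1)"
    using sum_list_staircase[of "nat m" "nat m"] sum_list_staircase[of "Suc (nat (- m))" "nat (- m)"]
    by (auto simp: L_def staircase_of_pent_def algebra_simps)
  then have "sum_list L = n" using assms(1) by (simp add: pent_roots_def)
  moreover have "length L = nat \<bar>m\<bar>" by (simp add: L_def staircase_of_pent_def)
  then have "L \<noteq> []" using assms(2) by auto
  moreover have "consec_run L = length L" "sorted_wrt (>) L" "0 \<notin> set L"
    "last L \<in> {length L, Suc (length L)}"
    using assms(2)
    by (auto simp: L_def staircase_of_pent_def consec_run_staircase sorted_staircase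
      set_staircase last_staircase)
  ultimately show ?thesis by (simp add: L_def pentagonal_staircases_def strict_partitions_def)
qed

lemma pentagonal_staircase_pent_of_staircase:
  assumes "L \<in> pentagonal_staircases n"
  shows "staircase_of_pent (pent_of_staircase L) = L"
    "pent_of_staircase L \<in> pent_roots (int n) - {0}"
proof -
  from assms have L: "L \<noteq> []" "consec_run L = length L" "last L \<in> {length L, Suc (length L)}"
    and sum: "sum_list L = n"
    by (auto simp: pentagonal_staircases_def strict_partitions_def)
  have stair: "L = staircase (last L) (length L)"
    using consec_run_eq_length_imp_staircase L(1,2) .
  then show "staircase_of_pent (pent_of_staircase L) = L"
    using L by (auto simp: staircase_of_pent_def pent_of_staircase_def)
  have "2 * int n = pent_of_staircase L * (3 * pent_of_staircase L - 1)"
    using sum_list_staircase[of "last L" "length L"] L(3)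
    by (subst (asm) stair[symmetric]) (auto simp: sum pent_of_staircase_def algebra_simps)
  then show "pent_of_staircase L \<in> pent_roots (int n) - {0}"
    using L(1) by (simp add: pent_roots_def pent_of_staircase_def)
qed

lemma pent_of_staircase_of_pent: "m \<noteq> 0 \<Longrightarrow> pent_of_staircase (staircase_of_pent m) = m"
  by (cases "0 < m") (simp_all add: pent_of_staircase_def staircase_of_pent_def last_staircase)

lemma sum_pentagonal_staircases:
  "(\<Sum>L\<in>pentagonal_staircases n. (-1) ^ length L) =
   (\<Sum>m\<in>pent_roots (int n) - {0}. (-1::'a::ring_1) ^ nat \<bar>m\<bar>)"
proof (rule sum.reindex_bij_witness[of _ staircase_of_pent pent_of_staircase])
  fix L assume "L \<in> pentagonal_staircases n"
  then show "(-1) ^ nat \<bar>pent_of_staircase L\<bar> = (-1::'a) ^ length L"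
    by (simp add: pent_of_staircase_def)
next
  fix L assume "L \<in> pentagonal_staircases n"
  then show "staircase_of_pent (pent_of_staircase L) = L"
    "pent_of_staircase L \<in> pent_roots (int n) - {0}"
    by (rule pentagonal_staircase_pent_of_staircase)+
qed (simp_all add: staircase_of_pent_in_pentagonal_staircases pent_of_staircase_of_pent)

lemma sum_franklin_cancel:
  "(\<Sum>L\<in>franklin_A n \<union> franklin_B n. (-1::'a::ring_1) ^ length L) = 0"
proof -
  have finite: "finite (franklin_A n)" "finite (franklin_B n)"
    by (auto intro: finite_subset[OF _ finite_strict_partitions] simp: franklin_A_def franklin_B_def)
  have "(\<Sum>L\<in>franklin_A n. - ((-1) ^ length L :: 'a)) = (\<Sum>L\<in>franklin_B n. (-1) ^ length L)"
  proof (rule sum.reindex_bij_witness[of _ franklin_raise franklin_lower])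
    fix L assume L: "L \<in> franklin_A n"
    have "length L = Suc (length (franklin_lower L))"
      using franklin_A_decomp[OF L] franklin_lower_decomp by (metis length_append length_map
        length_append_singleton append_assoc add.commute)
    then show "(-1) ^ length (franklin_lower L) = - ((-1) ^ length L :: 'a)" by simp
  qed (simp_all add: franklin_lower_in_B franklin_raise_lower franklin_raise_in_A franklin_lower_raise)
  then have "(\<Sum>L\<in>franklin_B n. (-1) ^ length L) = - (\<Sum>L\<in>franklin_A n. (-1::'a) ^ length L)"
    by (simp add: sum_negf)
  moreover have "franklin_A n \<inter> franklin_B n = {}"
    by (auto simp: franklin_A_def franklin_B_def)
  ultimately show ?thesis by (simp add: sum.union_disjoint finite)
qed

theorem sum_strict_partitions_sign:
  "(\<Sum>L\<in>strict_partitions n. (-1) ^ length L) = pent_coeff (int n)"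
proof (cases "n = 0")
  case True
  have "pent_roots 0 = {0}" using pent_roots_cases[of 0] by (auto simp: pent_roots_def)
  then show ?thesis by (simp add: True strict_partitions_0 pent_coeff_eq_sum_pent_roots)
next
  case False
  have finite: "finite (franklin_A n \<union> franklin_B n)" "finite (pentagonal_staircases n)"
    by (auto intro: finite_subset[OF _ finite_strict_partitions]
      simp: franklin_A_def franklin_B_def pentagonal_staircases_def)
  have "0 \<notin> pent_roots (int n)" using False by (simp add: pent_roots_def)
  then have "pent_roots (int n) - {0} = pent_roots (int n)" by blast
  then show ?thesis
    using strict_partitions_franklin_split[of n] False finite
    by (simp add: sum.union_disjoint sum_franklin_cancel sum_pentagonal_staircases
      pent_coeff_eq_sum_pent_roots)
qed

section \<open>The partition convolution\<close>

definition partitions :: "nat \<Rightarrow> nat multiset set" where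
  "partitions n = {M. (\<forall>x\<in>#M. 0 < x) \<and> sum_mset M = n}"

lemma finite_partitions: "finite (partitions n)"
proof (rule finite_subset)
  show "partitions n \<subseteq> mset ` {xs. set xs \<subseteq> {1..n} \<and> length xs \<le> n}"
  proof
    fix M assume M: "M \<in> partitions n"
    obtain xs where xs: "M = mset xs" using ex_mset by metis
    have "set xs \<subseteq> {1..n}"
      using M sum_mset.remove[of _ M] by (fastforce simp: partitions_def xs Suc_le_eq)
    moreover have "length xs \<le> n"
    proof -
      have "size M \<le> sum_mset M" if "\<forall>x\<in>#M. 0 < x" for M :: "nat multiset"
        using that by (induction M) auto
      from this[of M] M show ?thesis by (simp add: partitions_def xs)
    qed
    ultimately show "M \<in> mset ` {xs. set xs \<subseteq> {1..n} \<and> length xs \<le> n}" using xs by blast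
  qed
qed (simp add: finite_lists_length_le)

lemma partitions_0: "partitions 0 = {{#}}"
  using multiset_nonemptyE by (fastforce simp: partitions_def)

definition strict_partition_pairs :: "nat \<Rightarrow> (nat list \<times> nat multiset) set" where
  "strict_partition_pairs n = {(L, Q). sorted_wrt (>) L \<and> 0 \<notin> set L \<and> (\<forall>x\<in>#Q. 0 < x) \<and>
     sum_list L + sum_mset Q = n}"

lemma sum_convolution_eq_sum_strict_partition_pairs:
  "(\<Sum>l=0..n. (\<Sum>L\<in>strict_partitions l. (-1) ^ length L) * of_nat (card (partitions (n - l)))) =
   (\<Sum>(L, Q)\<in>strict_partition_pairs n. (-1::'a::comm_ring_1) ^ length L)"
proof -
  have "(\<Sum>l=0..n. (\<Sum>L\<in>strict_partitions l. (-1) ^ length L) * of_nat (card (partitions (n - l))))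
      = (\<Sum>l=0..n. \<Sum>L\<in>strict_partitions l. \<Sum>Q\<in>partitions (n - l). (-1::'a) ^ length L)"
    by (simp add: sum_distrib_right mult_of_nat_commute)
  also have "\<dots> = (\<Sum>((l, L), Q)\<in>Sigma (Sigma {0..n} strict_partitions) (\<lambda>(l, L). partitions (n - l)).
                     (-1::'a) ^ length L)"
    using sum.Sigma[of "Sigma {0..n} strict_partitions" "\<lambda>(l, L). partitions (n - l)"
        "\<lambda>(l, L) Q. (-1::'a) ^ length L"]
    by (simp add: sum.Sigma finite_strict_partitions finite_partitions split_def)
  also have "\<dots> = (\<Sum>(L, Q)\<in>strict_partition_pairs n. (-1) ^ length L)"
    by (rule sum.reindex_bij_witness[of _ "\<lambda>(L, Q). ((sum_list L, L), Q)" "\<lambda>((l, L), Q). (L, Q)"])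
      (auto simp: strict_partition_pairs_def strict_partitions_def partitions_def)
  finally show ?thesis .
qed

text \<open>The overall smallest part moves between the strict partition, where it can only be the
  last part, and the ordinary partition.\<close>
definition move_min_part :: "nat list \<times> nat multiset \<Rightarrow> nat list \<times> nat multiset" where
  "move_min_part = (\<lambda>(L, Q). let m = Min (set L \<union> set_mset Q) in
     if m \<in> set L then (butlast L, add_mset m Q) else (L @ [m], Q - {#m#}))"

lemma move_min_part_swap:
  assumes "sorted_wrt (>) (L @ [m])" "\<forall>x\<in>#Q. m \<le> x"
  shows "move_min_part (L @ [m], Q) = (L, add_mset m Q)"
    "move_min_part (L, add_mset m Q) = (L @ [m], Q)"
proof -
  have above: "\<forall>x\<in>set L. m < x" using assms(1) by (simp add: sorted_wrt_append)
  have "Min (set (L @ [m]) \<union> set_mset Q) = m" "Min (set L \<union> set_mset (add_mset m Q)) = m"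
    using above assms(2) by (auto intro!: Min_eqI)
  moreover have "m \<notin> set L" using above by blast
  ultimately show "move_min_part (L @ [m], Q) = (L, add_mset m Q)"
    "move_min_part (L, add_mset m Q) = (L @ [m], Q)"
    unfolding move_min_part_def Let_def prod.case by simp_all
qed

lemma strict_partition_pairs_swap:
  assumes "sorted_wrt (>) (L @ [m])"
  shows "(L @ [m], Q) \<in> strict_partition_pairs n \<longleftrightarrow> (L, add_mset m Q) \<in> strict_partition_pairs n"
  using assms by (auto simp: strict_partition_pairs_def sorted_wrt_append)

lemma strict_partition_pairs_cases:
  assumes "(L, Q) \<in> strict_partition_pairs n" "n \<noteq> 0"
  obtains L' m Q' where "sorted_wrt (>) (L' @ [m])" "\<forall>x\<in>#Q'. m \<le> x"
    "(L, Q) = (L' @ [m], Q') \<or> (L, Q) = (L', add_mset m Q')"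
proof -
  define m where "m = Min (set L \<union> set_mset Q)"
  from assms have sorted: "sorted_wrt (>) L"
    and nonempty: "set L \<union> set_mset Q \<noteq> {}"
    by (auto simp: strict_partition_pairs_def)
  have m_le: "m \<le> x" if "x \<in> set L \<union> set_mset Q" for x
    using that by (simp add: m_def)
  have "m \<in> set L \<union> set_mset Q" using Min_in[OF _ nonempty] by (simp add: m_def)
  then consider "m \<in> set L" | "m \<in># Q" "m \<notin> set L" by blast
  then show thesis
  proof cases
    case 1
    then obtain L' a where L: "L = L' @ [a]" by (cases L rule: rev_cases) auto
    with sorted have "\<forall>x\<in>set L'. a < x" by (simp add: sorted_wrt_append)
    with 1 m_le[of a] L have "a = m" by force
    then show thesis using that[of L' m Q] sorted m_le L by auto
  next
    case 2
    then have "\<forall>x\<in>set L. m < x" using m_le by (metis Un_iff le_neq_implies_less)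
    then show thesis using that[of L m "Q - {#m#}"] sorted m_le 2
      by (auto simp: sorted_wrt_append dest: in_diffD)
  qed
qed

lemma sum_strict_partition_pairs_sign:
  assumes "n \<noteq> 0"
  shows "(\<Sum>(L, Q)\<in>strict_partition_pairs n. (-1::'a::ring_1) ^ length L) = 0"
proof (rule sum_involution_eq_0[where h = move_min_part])
  fix x assume x: "x \<in> strict_partition_pairs n"
  then obtain L m Q where sorted: "sorted_wrt (>) (L @ [m])" and Q: "\<forall>x\<in>#Q. m \<le> x"
    and x_cases: "x = (L @ [m], Q) \<or> x = (L, add_mset m Q)"
    using strict_partition_pairs_cases[of "fst x" "snd x" n] assms by auto
  note swap = move_min_part_swap[OF sorted Q] strict_partition_pairs_swap[OF sorted]
  show "move_min_part x \<in> strict_partition_pairs n" "move_min_part (move_min_part x) = x"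
    "move_min_part x \<noteq> x"
    "(case move_min_part x of (L, Q) \<Rightarrow> (-1::'a) ^ length L) + (case x of (L, Q) \<Rightarrow> (-1) ^ length L) = 0"
    using x_cases x by (auto simp: swap)
qed

theorem pent_coeff_partition_convolution:
  "(\<Sum>l=0..n. pent_coeff (int l) * of_nat (partition_count (n - l))) = (if n = 0 then 1 else 0)"
proof -
  have "strict_partition_pairs 0 = strict_partitions 0 \<times> partitions 0"
    by (auto simp: strict_partition_pairs_def strict_partitions_def partitions_def)
  then have pairs_0: "strict_partition_pairs 0 = {([], {#})}"
    by (simp add: strict_partitions_0 partitions_0)
  have "partition_count m = card (partitions m)" for m
    by (simp add: partition_count_def partitions_def)
  then have "(\<Sum>l=0..n. pent_coeff (int l) * of_nat (partition_count (n - l))) =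
      (\<Sum>l=0..n. (\<Sum>L\<in>strict_partitions l. (-1) ^ length L) * of_nat (card (partitions (n - l))))"
    by (simp add: sum_strict_partitions_sign)
  also have "\<dots> = (\<Sum>(L, Q)\<in>strict_partition_pairs n. (-1) ^ length L)"
    by (rule sum_convolution_eq_sum_strict_partition_pairs)
  also have "\<dots> = (if n = 0 then 1 else 0)"
    by (simp add: pairs_0 sum_strict_partition_pairs_sign)
  finally show ?thesis .
qed

section \<open>The determinant\<close>

lemma sum_geometric_times_shift_column:
  fixes x :: "'a::comm_ring_1"
  assumes "i \<le> j" "0 < j" "j < k"
  shows "(\<Sum>t<k. (if i \<le> t then x ^ (t - i) else 0) *
            ((if t = j then 1 else 0) - x * (if t + 1 = j then 1 else 0))) = (if i = j then 1 else 0)"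
proof -
  let ?g = "\<lambda>t. if i \<le> t then x ^ (t - i) else 0"
  have diag: "(\<Sum>t<k. ?g t * (if t = j then 1 else 0)) = x ^ (j - i)"
  proof -
    have "(\<Sum>t<k. ?g t * (if t = j then 1 else 0)) = (\<Sum>t<k. if t = j then ?g t else 0)"
      by (intro sum.cong) auto
    then show ?thesis using assms(1,3) by (simp add: sum.delta)
  qed
  have superdiag: "(\<Sum>t<k. ?g t * (if t + 1 = j then 1 else 0)) = ?g (j - 1)"
  proof -
    have "(\<Sum>t<k. ?g t * (if t + 1 = j then 1 else 0)) = (\<Sum>t<k. if t = j - 1 then ?g t else 0)"
      using assms(2) by (intro sum.cong) auto
    then show ?thesis using assms(2,3) by (simp add: sum.delta)
  qed
  have "(\<Sum>t<k. ?g t * ((if t = j then 1 else 0) - x * (if t + 1 = j then 1 else 0)))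
      = (\<Sum>t<k. ?g t * (if t = j then 1 else 0)) - x * (\<Sum>t<k. ?g t * (if t + 1 = j then 1 else 0))"
    by (simp only: right_diff_distrib sum_subtractf sum_distrib_left mult.left_commute)
  also have "\<dots> = x ^ (j - i) - x * ?g (j - 1)"
    by (simp only: diag superdiag)
  also have "\<dots> = (if i = j then 1 else 0)"
  proof (cases "i = j")
    case False
    then have "j - i = Suc (j - 1 - i)" using assms(1) by arith
    then show ?thesis using False by simp
  qed (use assms(2) in simp)
  finally show ?thesis .
qed

lemma pent_coeff_neg: "q < 0 \<Longrightarrow> pent_coeff q = 0"
  by (simp add: pent_coeff_def)

lemma partition_count_0: "partition_count 0 = 1"
  using partitions_0 by (simp add: partition_count_def partitions_def)

lemma pent_coeff_0: "pent_coeff 0 = 1"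
  using sum_strict_partitions_sign[of 0] by (simp add: strict_partitions_0)

lemma partition_pent_convolution_shift:
  "(\<Sum>l\<le>i. of_nat (partition_count (i - l)) * pent_coeff (int l - int c)) = (if i = c then 1 else 0)"
proof (cases "c \<le> i")
  case True
  have "(\<Sum>l\<le>i. of_nat (partition_count (i - l)) * pent_coeff (int l - int c))
      = (\<Sum>l\<in>{c..i}. of_nat (partition_count (i - l)) * pent_coeff (int l - int c))"
    by (intro sum.mono_neutral_cong_right) (auto simp: pent_coeff_neg)
  also have "\<dots> = (\<Sum>u=0..i - c. pent_coeff (int u) * of_nat (partition_count (i - c - u)))"
    using True by (intro sum.reindex_bij_witness[of _ "\<lambda>u. u + c" "\<lambda>l. l - c"]) auto
  also have "\<dots> = (if i = c then 1 else 0)"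
    using True pent_coeff_partition_convolution[of "i - c"] by simp
  finally show ?thesis .
qed (auto intro!: sum.neutral simp: pent_coeff_neg)

lemma partition_pent_convolution_succ:
  "(\<Sum>l\<le>i. of_nat (partition_count (i - l)) * pent_coeff (int l + 1)) =
   - of_nat (partition_count (i + 1))"
proof -
  have "(\<Sum>l\<le>i. of_nat (partition_count (i - l)) * pent_coeff (int l + 1))
      = (\<Sum>u=1..i + 1. pent_coeff (int u) * of_nat (partition_count (i + 1 - u)))"
    by (intro sum.reindex_bij_witness[of _ "\<lambda>u. u - 1" "\<lambda>l. l + 1"]) (auto simp: add.commute)
  also have "\<dots> = (\<Sum>u=0..i + 1. pent_coeff (int u) * of_nat (partition_count (i + 1 - u)))
      - pent_coeff 0 * of_nat (partition_count (i + 1))"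
    by (simp add: sum.atLeast_Suc_atMost)
  also have "\<dots> = - of_nat (partition_count (i + 1))"
    by (simp only: pent_coeff_partition_convolution) (simp add: pent_coeff_0)
  finally show ?thesis .
qed

definition partition_mat :: "nat \<Rightarrow> complex mat" where
  "partition_mat k = mat k k (\<lambda>(i, j). if j \<le> i then of_nat (partition_count (i - j)) else 0)"

definition pent_mat :: "nat \<Rightarrow> complex \<Rightarrow> complex mat" where
  "pent_mat k x = mat k k (\<lambda>(i, j). pent_coeff (int i - int j) - x * pent_coeff (int i - int j + 1))"

definition geometric_mat :: "nat \<Rightarrow> complex \<Rightarrow> complex mat" where
  "geometric_mat k x = mat k k (\<lambda>(i, j). if i \<le> j then x ^ (j - i) else 0)"

lemma partition_mat_mult_pent_mat:
  assumes "i < k" "j < k"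
  shows "(partition_mat k * pent_mat k x) $$ (i, j) =
    (if j = 0 then (if i = 0 then 1 else 0) + x * of_nat (partition_count (i + 1))
     else (if i = j then 1 else 0) - x * (if i + 1 = j then 1 else 0))"
proof -
  let ?p = "\<lambda>l. of_nat (partition_count (i - l)) :: complex"
  have "(partition_mat k * pent_mat k x) $$ (i, j) =
      (\<Sum>l<k. (if l \<le> i then ?p l else 0) *
        (pent_coeff (int l - int j) - x * pent_coeff (int l - int j + 1)))"
    using assms by (simp add: partition_mat_def pent_mat_def scalar_prod_def atLeast0LessThan)
  also have "\<dots> = (\<Sum>l\<le>i. ?p l * pent_coeff (int l - int j))
      - x * (\<Sum>l\<le>i. ?p l * pent_coeff (int l - int j + 1))"
    using assms(1)
    by (subst sum.mono_neutral_cong_right[of "{..<k}" "{..i}"])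
      (auto simp: right_diff_distrib sum_subtractf sum_distrib_left mult.left_commute)
  also have "\<dots> = (if j = 0 then (if i = 0 then 1 else 0) + x * of_nat (partition_count (i + 1))
     else (if i = j then 1 else 0) - x * (if i + 1 = j then 1 else 0))"
  proof (cases "j = 0")
    case False
    have "(\<Sum>l\<le>i. ?p l * pent_coeff (int l - int j + 1)) =
        (\<Sum>l\<le>i. ?p l * pent_coeff (int l - int (j - 1)))"
      using False by (intro sum.cong) (auto simp: algebra_simps)
    also have "\<dots> = (if i + 1 = j then 1 else 0)"
      using False partition_pent_convolution_shift[of i "j - 1"] by (auto simp: of_nat_diff)
    finally show ?thesis using False by (simp add: partition_pent_convolution_shift)
  qed (use partition_pent_convolution_shift[of i 0] partition_pent_convolution_succ[of i] in simp)
  finally show ?thesis .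
qed

lemma geometric_mat_mult_entry:
  assumes "i \<le> j" "j < k"
  shows "(geometric_mat k x * (partition_mat k * pent_mat k x)) $$ (i, j) =
    (if i = j then (if j = 0 then (\<Sum>n=0..k. of_nat (partition_count n) * x ^ n) else 1) else 0)"
proof -
  let ?g = "\<lambda>t. if i \<le> t then x ^ (t - i) else 0"
  have entry: "(geometric_mat k x * (partition_mat k * pent_mat k x)) $$ (i, j) =
      (\<Sum>t<k. ?g t * (partition_mat k * pent_mat k x) $$ (t, j))"
    using assms by (auto simp: geometric_mat_def scalar_prod_def atLeast0LessThan
      partition_mat_def pent_mat_def intro!: sum.cong)
  show ?thesis
  proof (cases "j = 0")
    case True
    then have "i = 0" using assms(1) by simp
    have "(\<Sum>t<k. ?g t * (partition_mat k * pent_mat k x) $$ (t, j)) =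
        (\<Sum>t<k. (if t = 0 then 1 else 0) + of_nat (partition_count (Suc t)) * x ^ Suc t)"
      using True \<open>i = 0\<close> by (intro sum.cong) (auto simp: partition_mat_mult_pent_mat algebra_simps)
    also have "\<dots> = (\<Sum>n=0..k. of_nat (partition_count n) * x ^ n)"
    proof -
      obtain m where k: "k = Suc m" using assms(2) by (cases k) auto
      show ?thesis
        by (simp add: k sum.distrib sum.atMost_Suc_shift atLeast0AtMost
          lessThan_Suc_atMost partition_count_0 del: sum.atMost_Suc)
    qed
    finally show ?thesis using entry True \<open>i = 0\<close> by simp
  next
    case False
    have "(\<Sum>t<k. ?g t * (partition_mat k * pent_mat k x) $$ (t, j)) =
        (\<Sum>t<k. ?g t * ((if t = j then 1 else 0) - x * (if t + 1 = j then 1 else 0)))"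
      using False assms(2) by (intro sum.cong) (auto simp: partition_mat_mult_pent_mat)
    then show ?thesis
      using entry sum_geometric_times_shift_column[OF assms(1) _ assms(2), where x = x] False by simp
  qed
qed

lemma det_lower_triangular_unit_diag_except_first:
  fixes A :: "'a::comm_ring_1 mat"
  assumes "A \<in> carrier_mat k k" "0 < k" "\<And>i j. i < j \<Longrightarrow> j < k \<Longrightarrow> A $$ (i, j) = 0"
    "\<And>i. 0 < i \<Longrightarrow> i < k \<Longrightarrow> A $$ (i, i) = 1"
  shows "det A = A $$ (0, 0)"
proof -
  have "det A = (\<Prod>i = 0..<k. A $$ (i, i))"
    using det_lower_triangular[OF assms(3,1)] assms(1) by (simp add: prod_list_diag_prod)
  also have "\<dots> = A $$ (0, 0) * (\<Prod>i = Suc 0..<k. A $$ (i, i))"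
    using assms(2) by (simp add: prod.atLeast_Suc_lessThan)
  also have "\<dots> = A $$ (0, 0)" using assms(4) by simp
  finally show ?thesis .
qed

lemma det_partition_mat: "det (partition_mat k) = 1"
  by (subst det_lower_triangular[of k])
    (auto simp: partition_mat_def prod_list_diag_prod partition_count_0)

lemma det_geometric_mat: "det (geometric_mat k x) = 1"
  by (subst det_upper_triangular[of _ k])
    (auto simp: geometric_mat_def upper_triangular_def prod_list_diag_prod)

theorem mainTheorem9:
  fixes k :: nat and x :: complex
  assumes "1 \<le> k"
  shows "(\<Sum>n=0..k. of_nat (partition_count n) * x ^ n) =
         det (mat k k (\<lambda>(i, j). pent_coeff (int i - int j) - x * pent_coeff (int i - int j + 1)))"
proof -
  let ?U = "geometric_mat k x" and ?P = "partition_mat k" and ?M = "pent_mat k x"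
  have carrier: "?U \<in> carrier_mat k k" "?P \<in> carrier_mat k k" "?M \<in> carrier_mat k k"
    by (simp_all add: geometric_mat_def partition_mat_def pent_mat_def)
  have "det (?U * (?P * ?M)) = det ?M"
    using carrier by (simp add: det_mult det_geometric_mat det_partition_mat)
  moreover have "det (?U * (?P * ?M)) = (?U * (?P * ?M)) $$ (0, 0)"
    using assms carrier
    by (intro det_lower_triangular_unit_diag_except_first[of _ k])
      (auto simp: geometric_mat_mult_entry simp del: index_mult_mat)
  moreover have "(?U * (?P * ?M)) $$ (0, 0) = (\<Sum>n=0..k. of_nat (partition_count n) * x ^ n)"
    using assms by (simp add: geometric_mat_mult_entry del: index_mult_mat)
  ultimately show ?thesis by (simp add: pent_mat_def)
qed

end
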